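(* Let $\mathscr{A}(n)=\{S\in\mathrm{Gl}(2n,\mathbb{R})\mid S^2=\mathbb{1},\ \omega(Sv,Sw)=-\omega(v,w)\ \forall v,w\in\mathbb{R}^{2n}\}$ be the space of linear anti-symplectic involutions of the standard symplectic vector space $(\mathbb{R}^{2n},\omega)$, and let $\mathcal{L}(n)$ be the Lagrangian Grassmannian of all linear Lagrangian subspaces of $\mathbb{R}^{2n}$. Then $\mathscr{A}(n)$ is diffeomorphic to the tangent bundle $T\mathcal{L}(n)$.
   Context: $\omega$ denotes the standard symplectic form on $\mathbb{R}^{2n}$. *)

theory Defs
  imports "HOL-Analysis.Analysis"
begin

text \<open>The standard symplectic vector space (R^{2n}, omega) is modelled as
  real^('n + 'n), with coordinates x_i = v$(Inl i), y_i = v$(Inr i), and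
  omega(v,w) = sum_i (x_i(v) y_i(w) - y_i(v) x_i(w)).  Here n = CARD('n).\<close>

definition symp :: "real^('n::finite + 'n) \<Rightarrow> real^('n + 'n) \<Rightarrow> real" where
  "symp v w = (\<Sum>i\<in>UNIV. v $ Inl i * w $ Inr i - v $ Inr i * w $ Inl i)"

text \<open>C-infinity maps on an open set (Frechet sense): coinductively, f is
  differentiable at every point and every directional derivative x \<mapsto> D x h
  is again C-infinity.\<close>

coinductive smooth_on :: "'a::euclidean_space set \<Rightarrow> ('a \<Rightarrow> 'b::euclidean_space) \<Rightarrow> bool"
  for U where
  "(\<forall>x\<in>U. (f has_derivative D x) (at x)) \<Longrightarrow> (\<forall>h. smooth_on U (\<lambda>x. D x h))
     \<Longrightarrow> smooth_on U f"

definition smooth_map_on :: "'a::euclidean_space set \<Rightarrow> ('a \<Rightarrow> 'b::euclidean_space) \<Rightarrow> bool" where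
  "smooth_map_on S f \<longleftrightarrow>
     (\<forall>x\<in>S. \<exists>U g. open U \<and> x \<in> U \<and> smooth_on U g \<and> (\<forall>y\<in>S \<inter> U. g y = f y))"

definition diffeomorphic_sets :: "'a::euclidean_space set \<Rightarrow> 'b::euclidean_space set \<Rightarrow> bool" where
  "diffeomorphic_sets S T \<longleftrightarrow>
     (\<exists>f g. f ` S \<subseteq> T \<and> g ` T \<subseteq> S \<and> (\<forall>x\<in>S. g (f x) = x) \<and> (\<forall>y\<in>T. f (g y) = y)
        \<and> smooth_map_on S f \<and> smooth_map_on T g)"

definition tangent_space :: "'a::euclidean_space set \<Rightarrow> 'a \<Rightarrow> 'a set" where
  "tangent_space M p = {v. \<exists>\<gamma> e. e > 0 \<and> smooth_on {-e<..<e} \<gamma> \<and> \<gamma> ` {-e<..<e} \<subseteq> M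
        \<and> \<gamma> 0 = p \<and> (\<gamma> has_vector_derivative v) (at 0)}"

definition tangent_bundle :: "'a::euclidean_space set \<Rightarrow> ('a \<times> 'a) set" where
  "tangent_bundle M = {(p, v). p \<in> M \<and> v \<in> tangent_space M p}"

definition antisymp_invol :: "(real^('n::finite + 'n)^('n + 'n)) set" where
  "antisymp_invol = {S. invertible S \<and> S ** S = mat 1 \<and>
      (\<forall>v w. symp (S *v v) (S *v w) = - symp v w)}"

definition lagrangian :: "(real^('n::finite + 'n)) set \<Rightarrow> bool" where
  "lagrangian L \<longleftrightarrow> subspace L \<and> dim L = CARD('n) \<and> (\<forall>v\<in>L. \<forall>w\<in>L. symp v w = 0)"

text \<open>The Lagrangian Grassmannian, realised as a subset of the matrices via the
  standard embedding L \<mapsto> orthogonal projection onto L.\<close>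

definition lag_grassmannian :: "(real^('n::finite + 'n)^('n + 'n)) set" where
  "lag_grassmannian = {P. \<exists>L. lagrangian L \<and>
      (\<forall>x. P *v x \<in> L \<and> (\<forall>y\<in>L. (x - P *v x) \<bullet> y = 0))}"

end

theory Submission
  imports Defs
begin

text \<open>An anti-symplectic involution S is the same thing as a pair of transverse Lagrangian
  subspaces, its eigenspaces for 1 and -1, and it is recovered from the oblique projection
  Q = (1 + S)/2 onto the first along the second.  Let P be the orthogonal projection onto the
  range of Q, a point of the Lagrangian Grassmannian in the projection model; explicitly
  P = Q (Q + Q^T - 1)^(-1).  Then X = (P - Q) + (P - Q)^T is a tangent vector at P and
  Q = P - P X, so S \<mapsto> (P, X) is a bijection onto the tangent bundle with inverse
  (P, X) \<mapsto> 2 (P - P X) - 1.  Here the tangent vectors at P are the symmetric X with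
  X = P X + X P and J X + X J = 0, J the matrix of \<open>\<omega>\<close>: such X are derivatives of curves of
  projections, and conversely X is the velocity of the curve of orthogonal projections onto
  the range of the idempotent P + t (1 - P) X P.  Both maps are rational in the matrix
  entries, hence smooth.\<close>

type_synonym 'n mat2n = "real^('n+'n)^('n+'n)"

lemma matrix_add_rdistrib: "(A + B) ** C = A ** C + B ** C" for A :: "real^'a^'b"
  by (vector matrix_matrix_mult_def sum.distrib[symmetric] field_simps)
lemma matrix_diff_rdistrib: "(A - B) ** C = A ** C - B ** C" for A :: "real^'a^'b"
  by (vector matrix_matrix_mult_def sum_subtractf[symmetric] field_simps)
lemma matrix_diff_ldistrib: "C ** (A - B) = C ** A - C ** B" for A :: "real^'a^'b"
  by (vector matrix_matrix_mult_def sum_subtractf[symmetric] field_simps)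
lemma matrix_neg_mul: "(- A) ** C = - (A ** C)" for A :: "real^'a^'b"
  by (vector matrix_matrix_mult_def sum_negf[symmetric] field_simps)
lemma matrix_mul_neg: "C ** (- A) = - (C ** A)" for A :: "real^'a^'b"
  by (vector matrix_matrix_mult_def sum_negf[symmetric] field_simps)
lemma matrix_scaleR_mul: "(r *\<^sub>R A) ** C = r *\<^sub>R (A ** C)" for A :: "real^'a^'b"
  by (simp add: scalar_matrix_assoc)
lemma matrix_mul_scaleR: "C ** (r *\<^sub>R A) = r *\<^sub>R (C ** A)" for A :: "real^'a^'b"
  by (simp add: matrix_scalar_ac scalar_matrix_assoc)
lemma transpose_add: "transpose (A + B) = transpose A + transpose B"
  by (vector transpose_def)
lemma transpose_diff: "transpose (A - B) = transpose A - transpose B"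
  by (vector transpose_def)
lemma transpose_neg: "transpose (- A) = - transpose A"
  by (vector transpose_def)
lemma transpose_zero: "transpose 0 = 0"
  by (vector transpose_def)

lemma matrix_times_numeral: "(A :: real^'a::finite^'b::finite) * numeral n = (numeral n :: real) *\<^sub>R A"
  by (simp add: vec_eq_iff)
lemma numeral_times_matrix: "numeral n * (A :: real^'a::finite^'b::finite) = (numeral n :: real) *\<^sub>R A"
  by (simp add: vec_eq_iff)

lemmas matrix_ring_simps = matrix_mul_assoc[symmetric] matrix_add_rdistrib matrix_add_ldistrib
  matrix_diff_rdistrib matrix_diff_ldistrib matrix_neg_mul matrix_mul_neg matrix_scaleR_mul
  matrix_mul_scaleR transpose_add transpose_diff transpose_neg transpose_zero transpose_scalar
  matrix_transpose_mul matrix_mul_lid matrix_mul_rid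

lemma matrix_mul_assoc_eq: "A ** B = C \<Longrightarrow> A ** (B ** D) = C ** D" for A :: "real^'a^'b"
  by (simp add: matrix_mul_assoc)

lemma matrix_vector_mult_neg: "(- A) *v x = - (A *v x)" for A :: "real^'a::finite^'b::finite"
  by (simp add: matrix_vector_mult_def vec_eq_iff sum_negf)

lemmas matrix_vector_simps = matrix_vector_mult_add_rdistrib matrix_vector_mult_diff_rdistrib
  matrix_vector_mult_neg matrix_vector_right_distrib vec.diff vec.neg vec.scale
  matrix_vector_mul_assoc[symmetric] matrix_vector_mul_lid scaleR_matrix_vector_assoc[symmetric]

lemma inner_matrix_transpose: "(A *v x) \<bullet> y = x \<bullet> (transpose A *v y)" for A :: "real^'a::finite^'b::finite"
  by (metis dot_lmul_matrix inner_commute transpose_matrix_vector)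

lemma matrix_eqI_inner: fixes A :: "real^'a::finite^'b::finite"
  assumes "\<And>v w. v \<bullet> (A *v w) = v \<bullet> (B *v w)" shows "A = B"
proof -
  have "A *v w = B *v w" for w
  proof -
    have "(A *v w - B *v w) \<bullet> (A *v w - B *v w)
        = (A *v w - B *v w) \<bullet> (A *v w) - (A *v w - B *v w) \<bullet> (B *v w)"
      by (simp add: inner_diff_right)
    also have "\<dots> = 0" using assms[of "A *v w - B *v w" w] by simp
    finally show ?thesis by simp
  qed
  then show ?thesis by (simp add: matrix_eq)
qed

lemma matrix_inv_right: "invertible A \<Longrightarrow> A ** matrix_inv A = mat 1"
  using someI_ex[of "\<lambda>A'. A ** A' = mat 1 \<and> A' ** A = mat 1"] unfolding matrix_inv_def invertible_def
  by blast
lemma matrix_inv_left: "invertible A \<Longrightarrow> matrix_inv A ** A = mat 1"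
  using someI_ex[of "\<lambda>A'. A ** A' = mat 1 \<and> A' ** A = mat 1"] unfolding matrix_inv_def invertible_def
  by blast

lemma matrix_inv_unique: fixes A :: "real^'m::finite^'m" assumes "A ** B = mat 1"
  shows "matrix_inv A = B"
proof -
  have i: "invertible A" using assms invertible_right_inverse by blast
  have "matrix_inv A = matrix_inv A ** (A ** B)" by (simp add: assms)
  also have "\<dots> = B" by (simp add: matrix_mul_assoc matrix_inv_left[OF i])
  finally show ?thesis .
qed

lemma bounded_bilinear_matrix_mul:
  "bounded_bilinear (\<lambda>(A::real^'a::finite^'b::finite) (B::real^'c::finite^'a). A ** B)"
  unfolding bilinear_conv_bounded_bilinear[symmetric] bilinear_def
  by (auto intro!: linearI simp: matrix_add_ldistrib matrix_add_rdistrib matrix_mul_scaleR matrix_scaleR_mul)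

lemmas bounded_linear_matrix_mul_left = bounded_bilinear.bounded_linear_left[OF bounded_bilinear_matrix_mul]
lemmas bounded_linear_matrix_mul_right = bounded_bilinear.bounded_linear_right[OF bounded_bilinear_matrix_mul]

lemma bounded_linear_transpose: "bounded_linear (transpose :: real^'a::finite^'b::finite \<Rightarrow> _)"
  unfolding linear_conv_bounded_linear[symmetric]
  by (rule linearI) (simp_all add: transpose_add transpose_scalar)

lemma bounded_linear_uminus: "bounded_linear (uminus :: 'a::real_normed_vector \<Rightarrow> 'a)"
  using bounded_linear_minus[OF bounded_linear_ident] by (simp add: fun_eq_iff)

section \<open>The derivative of matrix inversion\<close>

lemma continuous_on_matrix_entry: "continuous_on S (\<lambda>A::real^'a::finite^'b::finite. A $ i $ j)"
  by (intro linear_continuous_on bounded_linear_compose[OF bounded_linear_vec_nth bounded_linear_vec_nth])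

lemma continuous_on_det: "continuous_on S (\<lambda>A::real^'a::finite^'a. det A)"
  unfolding det_def by (intro continuous_intros continuous_on_matrix_entry)

lemma open_invertible: "open {A::real^'a::finite^'a. invertible A}"
  unfolding invertible_det_nz by (rule open_Collect_neq) (auto intro: continuous_on_det continuous_intros)

lemma matrix_inv_cramer: fixes A :: "real^'a::finite^'a" assumes "invertible A"
  shows "matrix_inv A = (\<chi> k j. det (\<chi> i i'. if i' = k then (axis j 1 :: real^'a) $ i else A$i$i') / det A)"
  unfolding vec_eq_iff
proof (intro allI)
  fix k j
  have "A *v (matrix_inv A *v axis j 1) = axis j 1"
    by (simp add: matrix_vector_mul_assoc matrix_inv_right[OF assms])
  then have "matrix_inv A *v axis j 1
      = (\<chi> k. det (\<chi> i i'. if i' = k then (axis j 1 :: real^'a) $ i else A$i$i') / det A)"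
    using cramer assms invertible_det_nz by blast
  moreover have "(matrix_inv A *v axis j 1) $ k = matrix_inv A $ k $ j"
    by (simp add: matrix_vector_mult_def axis_def if_distrib if_distribR cong: if_cong)
  ultimately show "matrix_inv A $ k $ j
      = (\<chi> k j. det (\<chi> i i'. if i' = k then (axis j 1 :: real^'a) $ i else A$i$i') / det A) $ k $ j"
    by simp
qed

lemma continuous_on_matrix_inv: "continuous_on {A::real^'a::finite^'a. invertible A} matrix_inv"
proof -
  have "continuous_on {A::real^'a::finite^'a. invertible A}
     (\<lambda>A. (\<chi> k j. det (\<chi> i i'. if i' = k then (axis j 1 :: real^'a) $ i else A$i$i') / det A))"
    unfolding det_def
    apply (intro continuous_intros continuous_on_matrix_entry)
     apply (case_tac "i' = k"; simp add: continuous_on_matrix_entry)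
    apply (auto simp: invertible_det_nz det_def)
    done
  then show ?thesis
    by (rule continuous_on_eq) (simp add: matrix_inv_cramer)
qed

text \<open>The remainder of the linearisation factors as (A^(-1) - Y^(-1)) (Y - A) A^(-1), which is
  o(|Y - A|) by continuity of inversion.\<close>

lemma has_derivative_matrix_inv: fixes A :: "real^'a::finite^'a" assumes "invertible A"
  shows "(matrix_inv has_derivative (\<lambda>H. - (matrix_inv A ** H ** matrix_inv A))) (at A)"
proof -
  define B where "B = matrix_inv A"
  obtain K where K: "K > 0" "\<And>(X::real^'a^'a) (Y::real^'a^'a). norm (X ** Y) \<le> norm X * norm Y * K"
    using bounded_bilinear.pos_bounded[OF bounded_bilinear_matrix_mul] by blast
  obtain e where e: "e > 0" "ball A e \<subseteq> {A. invertible A}"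
    using open_invertible[unfolded open_contains_ball] assms by blast
  have lin: "bounded_linear (\<lambda>H. - (matrix_inv A ** H ** matrix_inv A))"
    by (intro bounded_linear_minus
        bounded_linear_compose[OF bounded_linear_matrix_mul_left bounded_linear_matrix_mul_right])
  have ct: "isCont matrix_inv A"
    using continuous_on_matrix_inv open_invertible assms continuous_on_eq_continuous_at by blast
  show ?thesis
  proof (rule has_derivativeI_sandwich[OF e(1) lin, where H = "\<lambda>y. norm (B - matrix_inv y) * norm B * K * K"])
    fix y assume y: "y \<noteq> A" "dist y A < e"
    then have iy: "invertible y" using e(2) by (auto simp: dist_commute)
    have eq: "matrix_inv y - matrix_inv A - - (matrix_inv A ** (y - A) ** matrix_inv A)
          = (B - matrix_inv y) ** ((y - A) ** B)"
      by (simp add: B_def matrix_ring_simps matrix_inv_left matrix_inv_right iy assms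
          matrix_mul_assoc_eq[OF matrix_inv_left[OF iy]] algebra_simps)
    have "norm ((B - matrix_inv y) ** ((y - A) ** B))
        \<le> norm (B - matrix_inv y) * (norm (y - A) * norm B * K) * K"
      by (rule order_trans[OF K(2)])
        (intro mult_right_mono mult_left_mono K(2), auto simp: less_imp_le[OF K(1)])
    then show "norm (matrix_inv y - matrix_inv A - - (matrix_inv A ** (y - A) ** matrix_inv A)) / norm (y - A)
          \<le> norm (B - matrix_inv y) * norm B * K * K"
      using y unfolding eq by (simp add: divide_le_eq mult_ac)
  next
    have "((\<lambda>y. B - matrix_inv y) \<longlongrightarrow> B - matrix_inv A) (at A)"
      using ct unfolding isCont_def by (intro tendsto_diff tendsto_const)
    then have "((\<lambda>y. norm (B - matrix_inv y) * norm B * K * K)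
        \<longlongrightarrow> norm (B - matrix_inv A) * norm B * K * K) (at A)"
      by (intro tendsto_mult_right tendsto_norm)
    then show "((\<lambda>y. norm (B - matrix_inv y) * norm B * K * K) \<longlongrightarrow> 0) (at A)"
      by (simp add: B_def)
  qed
qed

section \<open>Smoothness of rational matrix expressions\<close>

text \<open>A deep embedding of matrix-valued expressions built from constants, bounded linear
  maps, sums, products and inverses.  Its formal derivative is again such an expression, so
  smoothness of every evaluation follows by a single coinduction.\<close>

datatype ('a, 'm) mexpr = MConst "real^'m^'m" | MLin "'a \<Rightarrow> real^'m^'m"
  | MAdd "('a, 'm) mexpr" "('a, 'm) mexpr" | MMul "('a, 'm) mexpr" "('a, 'm) mexpr"
  | MMap "real^'m^'m \<Rightarrow> real^'m^'m" "('a, 'm) mexpr" | MInv "('a, 'm) mexpr"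

primrec meval :: "('a, 'm::finite) mexpr \<Rightarrow> 'a \<Rightarrow> real^'m^'m" where
  "meval (MConst c) x = c"
| "meval (MLin l) x = l x"
| "meval (MAdd a b) x = meval a x + meval b x"
| "meval (MMul a b) x = meval a x ** meval b x"
| "meval (MMap L a) x = L (meval a x)"
| "meval (MInv a) x = matrix_inv (meval a x)"

primrec mexpr_wf :: "('a::real_normed_vector, 'm::finite) mexpr \<Rightarrow> bool" where
  "mexpr_wf (MConst c) = True"
| "mexpr_wf (MLin l) = bounded_linear l"
| "mexpr_wf (MAdd a b) = (mexpr_wf a \<and> mexpr_wf b)"
| "mexpr_wf (MMul a b) = (mexpr_wf a \<and> mexpr_wf b)"
| "mexpr_wf (MMap L a) = (bounded_linear L \<and> mexpr_wf a)"
| "mexpr_wf (MInv a) = mexpr_wf a"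

primrec mexpr_defined :: "('a, 'm::finite) mexpr \<Rightarrow> 'a \<Rightarrow> bool" where
  "mexpr_defined (MConst c) x = True"
| "mexpr_defined (MLin l) x = True"
| "mexpr_defined (MAdd a b) x = (mexpr_defined a x \<and> mexpr_defined b x)"
| "mexpr_defined (MMul a b) x = (mexpr_defined a x \<and> mexpr_defined b x)"
| "mexpr_defined (MMap L a) x = mexpr_defined a x"
| "mexpr_defined (MInv a) x = (mexpr_defined a x \<and> invertible (meval a x))"

primrec mexpr_deriv :: "'a \<Rightarrow> ('a, 'm::finite) mexpr \<Rightarrow> ('a, 'm) mexpr" where
  "mexpr_deriv h (MConst c) = MConst 0"
| "mexpr_deriv h (MLin l) = MConst (l h)"
| "mexpr_deriv h (MAdd a b) = MAdd (mexpr_deriv h a) (mexpr_deriv h b)"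
| "mexpr_deriv h (MMul a b) = MAdd (MMul (mexpr_deriv h a) b) (MMul a (mexpr_deriv h b))"
| "mexpr_deriv h (MMap L a) = MMap L (mexpr_deriv h a)"
| "mexpr_deriv h (MInv a) = MMap uminus (MMul (MInv a) (MMul (mexpr_deriv h a) (MInv a)))"

lemma mexpr_wf_deriv: "mexpr_wf e \<Longrightarrow> mexpr_wf (mexpr_deriv h e)"
  by (induction e) (auto intro: bounded_linear_uminus)

lemma mexpr_defined_deriv: "mexpr_defined e x \<Longrightarrow> mexpr_defined (mexpr_deriv h e) x"
  by (induction e) auto

lemma has_derivative_meval: "mexpr_wf e \<Longrightarrow> mexpr_defined e x
    \<Longrightarrow> (meval e has_derivative (\<lambda>h. meval (mexpr_deriv h e) x)) (at x)"
proof (induction e)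
  case (MConst c) then show ?case by simp
next
  case (MLin l) then show ?case by (simp add: bounded_linear.has_derivative[OF _ has_derivative_ident])
next
  case (MAdd a b) then show ?case by (simp add: has_derivative_add)
next
  case (MMul a b)
  then have "((\<lambda>x. meval a x ** meval b x) has_derivative
      (\<lambda>h. meval a x ** meval (mexpr_deriv h b) x + meval (mexpr_deriv h a) x ** meval b x)) (at x)"
    by (intro bounded_bilinear.FDERIV[OF bounded_bilinear_matrix_mul]) auto
  then show ?case by (simp add: add.commute)
next
  case (MMap L a) then show ?case by (auto intro: bounded_linear.has_derivative)
next
  case (MInv a)
  then have "((\<lambda>x. matrix_inv (meval a x)) has_derivative
     (\<lambda>h. - (matrix_inv (meval a x) ** meval (mexpr_deriv h a) x ** matrix_inv (meval a x)))) (at x)"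
    by (intro has_derivative_compose[OF _ has_derivative_matrix_inv]) auto
  then show ?case by (simp add: matrix_mul_assoc)
qed

lemma smooth_on_meval: assumes "mexpr_wf e" "\<forall>x\<in>U. mexpr_defined e x" shows "smooth_on U (meval e)"
proof -
  have "\<exists>e. f = meval e \<and> mexpr_wf e \<and> (\<forall>x\<in>U. mexpr_defined e x) \<Longrightarrow> smooth_on U f" for f
  proof (coinduction arbitrary: f rule: smooth_on.coinduct)
    case (smooth_on f)
    then obtain e where e: "f = meval e" "mexpr_wf e" "\<forall>x\<in>U. mexpr_defined e x" by blast
    show ?case
      using e by (intro exI[of _ f] exI[of _ "\<lambda>x h. meval (mexpr_deriv h e) x"])
        (auto intro!: has_derivative_meval mexpr_wf_deriv mexpr_defined_deriv)
  qed
  then show ?thesis using assms by blast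
qed

lemma smooth_on_Pair: assumes "smooth_on U f" "smooth_on U g" shows "smooth_on U (\<lambda>x. (f x, g x))"
proof -
  have "\<exists>f g. F = (\<lambda>x. (f x, g x)) \<and> smooth_on U f \<and> smooth_on U g \<Longrightarrow> smooth_on U F" for F
  proof (coinduction arbitrary: F rule: smooth_on.coinduct)
    case (smooth_on F)
    then obtain f g where fg: "F = (\<lambda>x. (f x, g x))" "smooth_on U f" "smooth_on U g" by blast
    obtain Df where Df: "\<forall>x\<in>U. (f has_derivative Df x) (at x)" "\<forall>h. smooth_on U (\<lambda>x. Df x h)"
      using fg(2) by (cases rule: smooth_on.cases) blast
    obtain Dg where Dg: "\<forall>x\<in>U. (g has_derivative Dg x) (at x)" "\<forall>h. smooth_on U (\<lambda>x. Dg x h)"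
      using fg(3) by (cases rule: smooth_on.cases) blast
    show ?case
      using Df Dg fg(1) by (intro exI[of _ F] exI[of _ "\<lambda>x h. (Df x h, Dg x h)"])
        (fastforce intro!: has_derivative_Pair)
  qed
  then show ?thesis using assms by blast
qed

lemma smooth_map_onI: assumes "open U" "S \<subseteq> U" "smooth_on U g" "\<forall>x\<in>S. g x = f x"
  shows "smooth_map_on S f"
  unfolding smooth_map_on_def using assms by blast

lemma open_mexpr_defined: "mexpr_wf e \<Longrightarrow> open {x. mexpr_defined e x}"
proof (induction e)
  case (MAdd a b)
  then show ?case by (simp add: Collect_conj_eq open_Int)
next
  case (MMul a b)
  then show ?case by (simp add: Collect_conj_eq open_Int)
next
  case (MInv a)
  have "isCont (meval a) x" if "mexpr_defined a x" for x
    using has_derivative_meval[of a x] MInv.prems that by (auto intro: has_derivative_continuous)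
  then have "continuous_on {x. mexpr_defined a x} (meval a)"
    by (blast intro: continuous_at_imp_continuous_on)
  moreover have "open {x. mexpr_defined a x}" using MInv by simp
  ultimately have "open (meval a -` {A. invertible A} \<inter> {x. mexpr_defined a x})"
    using continuous_on_open_vimage open_invertible by blast
  then show ?case by (simp add: Collect_conj_eq Int_commute vimage_def)
next
  case (MMap L a)
  then show ?case by (simp add: Collect_conj_eq)
next
  case (MConst c)
  have "Collect (mexpr_defined (MConst c)) = UNIV" by auto
  then show ?case by simp
next
  case (MLin l)
  have "Collect (mexpr_defined (MLin l)) = UNIV" by auto
  then show ?case by simp
qed

section \<open>The symplectic form and Lagrangian subspaces\<close>

declare transpose_matrix_vector [simp del]

lemma sum_UNIV_sum_type:
  "(\<Sum>a\<in>(UNIV::('a::finite + 'b::finite) set). f a) = (\<Sum>i\<in>UNIV. f (Inl i)) + (\<Sum>i\<in>UNIV. f (Inr i))"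
  using sum.Plus[of "UNIV::'a set" "UNIV::'b set" f] by (simp add: comp_def)

definition omega_mat :: "'n::finite mat2n" where
  "omega_mat = (\<chi> a b. case a of Inl i \<Rightarrow> (case b of Inr j \<Rightarrow> if i = j then 1 else 0 | Inl _ \<Rightarrow> 0)
                        | Inr i \<Rightarrow> (case b of Inl j \<Rightarrow> if i = j then -1 else 0 | Inr _ \<Rightarrow> 0))"

lemma symp_eq_inner_omega_mat: "symp v w = v \<bullet> (omega_mat *v w)"
  by (simp add: symp_def inner_vec_def matrix_vector_mult_def omega_mat_def sum_UNIV_sum_type
      if_distrib if_distribR sum.If_cases sum_distrib_left sum_subtractf sum_negf cong: if_cong)

lemma omega_mat_squared: "omega_mat ** omega_mat = (- mat 1 :: 'n::finite mat2n)"
  unfolding vec_eq_iff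
proof (intro allI)
  fix a b :: "'n + 'n"
  show "(omega_mat ** omega_mat) $ a $ b = (- mat 1 :: 'n mat2n) $ a $ b"
    by (cases a; cases b) (simp_all add: omega_mat_def matrix_matrix_mult_def mat_def sum_UNIV_sum_type
        if_distrib if_distribR sum.If_cases cong: if_cong)
qed

lemma omega_mat_omega_mat_vector: "omega_mat *v (omega_mat *v x) = - x"
  by (simp add: matrix_vector_mul_assoc omega_mat_squared matrix_vector_mult_neg)

definition isotropic :: "(real^('n::finite + 'n)) set \<Rightarrow> bool" where
  "isotropic L \<longleftrightarrow> (\<forall>v\<in>L. \<forall>w\<in>L. v \<bullet> (omega_mat *v w) = 0)"

definition orth_compl :: "(real^'m::finite) set \<Rightarrow> (real^'m) set" where
  "orth_compl L = {y. \<forall>x\<in>L. orthogonal x y}"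

lemma subspace_orth_compl: "subspace (orth_compl L)"
  unfolding orth_compl_def subspace_def orthogonal_def by (auto simp: inner_add_right)

lemma dim_orth_compl: "subspace L \<Longrightarrow> dim (orth_compl L) + dim L = 2 * CARD('n)"
  for L :: "(real^('n::finite + 'n)) set"
  using dim_subspace_orthogonal_to_vectors[of L UNIV] by (simp add: orth_compl_def card_UNIV_sum)

lemma dim_omega_mat_image: "dim ((*v) (omega_mat::'n::finite mat2n) ` L) = dim L"
proof -
  have "inj ((*v) (omega_mat::'n::finite mat2n))"
    by (metis omega_mat_omega_mat_vector injI neg_equal_iff_equal)
  then show ?thesis by (intro dim_image_eq matrix_vector_mul_linear) (auto simp: inj_on_def)
qed

lemma omega_mat_image_isotropic_subset: "isotropic L \<Longrightarrow> (*v) omega_mat ` L \<subseteq> orth_compl L"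
  unfolding isotropic_def orth_compl_def orthogonal_def by auto

lemma isotropic_dim_le: fixes L :: "(real^('n::finite + 'n)) set"
  assumes "subspace L" "isotropic L" shows "dim L \<le> CARD('n)"
proof -
  have "dim ((*v) omega_mat ` L) \<le> dim (orth_compl L)"
    by (rule dim_subset[OF omega_mat_image_isotropic_subset[OF assms(2)]])
  then show ?thesis using dim_orth_compl[OF assms(1)] dim_omega_mat_image[of L] by simp
qed

lemma lagrangian_iff_isotropic: "lagrangian L \<longleftrightarrow> subspace L \<and> dim L = CARD('n) \<and> isotropic L"
  for L :: "(real^('n::finite + 'n)) set"
  unfolding lagrangian_def isotropic_def symp_eq_inner_omega_mat by blast

lemma omega_mat_image_lagrangian: fixes L :: "(real^('n::finite + 'n)) set"
  assumes "lagrangian L" shows "(*v) omega_mat ` L = orth_compl L"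
proof -
  have L: "subspace L" "dim L = CARD('n)" "isotropic L" using assms lagrangian_iff_isotropic by auto
  show ?thesis
  proof (rule subspace_dim_equal)
    show "subspace ((*v) omega_mat ` L)" by (rule linear_subspace_image[OF matrix_vector_mul_linear L(1)])
    show "subspace (orth_compl L)" by (rule subspace_orth_compl)
    show "(*v) omega_mat ` L \<subseteq> orth_compl L" by (rule omega_mat_image_isotropic_subset[OF L(3)])
    show "dim (orth_compl L) \<le> dim ((*v) omega_mat ` L)"
      using dim_orth_compl[OF L(1)] dim_omega_mat_image[of L] L(2) by simp
  qed
qed

lemma subspace_range_matrix: "subspace (range ((*v) (A::real^'a::finite^'b::finite)))"
  by (rule linear_subspace_image[OF matrix_vector_mul_linear subspace_UNIV])

lemma isotropic_range: fixes A :: "'n::finite mat2n" assumes "transpose A ** omega_mat ** A = 0"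
  shows "isotropic (range ((*v) A))"
  unfolding isotropic_def
proof (clarify)
  fix a b
  have "(A *v a) \<bullet> (omega_mat *v (A *v b)) = a \<bullet> ((transpose A ** omega_mat ** A) *v b)"
    by (simp add: inner_matrix_transpose matrix_vector_mul_assoc matrix_mul_assoc)
  then show "(A *v a) \<bullet> (omega_mat *v (A *v b)) = 0" by (simp add: assms)
qed

lemma orthogonal_projection_props:
  fixes P :: "real^'m::finite^'m"
  assumes L: "subspace L" and P: "\<forall>x. P *v x \<in> L \<and> (\<forall>y\<in>L. (x - P *v x) \<bullet> y = 0)"
  shows "\<And>y. y \<in> L \<Longrightarrow> P *v y = y" "transpose P = P" "P ** P = P"
    "\<And>w. w \<in> orth_compl L \<Longrightarrow> P *v w = 0"
proof -
  show fixL: "P *v y = y" if "y \<in> L" for y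
  proof -
    have "y - P *v y \<in> L" using L P that by (simp add: subspace_diff)
    then have "(y - P *v y) \<bullet> (y - P *v y) = 0" using P by blast
    then show ?thesis by simp
  qed
  have sym: "(P *v x) \<bullet> y = x \<bullet> (P *v y)" for x y
  proof -
    have a: "(P *v x) \<bullet> (y - P *v y) = 0" using P by (metis inner_commute)
    have b: "(x - P *v x) \<bullet> (P *v y) = 0" using P by blast
    have "(P *v x) \<bullet> y = (P *v x) \<bullet> (P *v y)" using a by (simp add: inner_diff_right)
    also have "\<dots> = x \<bullet> (P *v y)" using b by (simp add: inner_diff_left)
    finally show ?thesis .
  qed
  show "transpose P = P"
    by (rule matrix_eqI_inner) (simp add: sym flip: inner_matrix_transpose)
  show "P ** P = P"
    by (simp add: matrix_eq fixL P flip: matrix_vector_mul_assoc)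
  show "P *v w = 0" if "w \<in> orth_compl L" for w
  proof -
    have a: "(P *v w) \<bullet> w = 0" using that P unfolding orth_compl_def orthogonal_def by blast
    have b: "(w - P *v w) \<bullet> (P *v w) = 0" using P by blast
    have "(P *v w) \<bullet> (P *v w) = (P *v w) \<bullet> w - (P *v w) \<bullet> (w - P *v w)"
      by (simp add: inner_diff_right)
    also have "\<dots> = 0" using a b by (simp add: inner_commute)
    finally show ?thesis by simp
  qed
qed

lemma orthogonal_projection_onto_range: fixes P :: "real^'m::finite^'m"
  assumes "transpose P = P" "P ** P = P"
  shows "\<forall>x. P *v x \<in> range ((*v) P) \<and> (\<forall>y\<in>range ((*v) P). (x - P *v x) \<bullet> y = 0)"
proof (intro allI conjI ballI)
  fix x show "P *v x \<in> range ((*v) P)" by simp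
  fix y assume "y \<in> range ((*v) P)"
  then obtain b where b: "y = P *v b" by auto
  have "(x - P *v x) \<bullet> y = (P *v (x - P *v x)) \<bullet> b"
    using inner_matrix_transpose[of P "x - P *v x" b] assms(1) b by (simp add: inner_commute)
  also have "\<dots> = 0" by (simp add: matrix_vector_simps) (simp add: matrix_vector_mul_assoc assms(2))
  finally show "(x - P *v x) \<bullet> y = 0" .
qed

lemma invertible_idempotent_sym_sum: fixes Q :: "real^'m::finite^'m" assumes Q: "Q ** Q = Q"
  shows "invertible (Q + transpose Q - mat 1)"
  unfolding invertible_left_inverse matrix_left_invertible_ker
proof (intro allI impI)
  fix v assume v: "(Q + transpose Q - mat 1) *v v = 0"
  then have v1: "Q *v v + transpose Q *v v = v" by (simp add: matrix_vector_simps algebra_simps)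
  then have "Q *v (Q *v v + transpose Q *v v) = Q *v v" by simp
  then have "Q *v (transpose Q *v v) = 0" by (simp add: matrix_vector_right_distrib matrix_vector_mul_assoc Q)
  then have "(transpose Q *v v) \<bullet> (transpose Q *v v) = 0"
    by (simp add: inner_matrix_transpose)
  then have Qtv: "transpose Q *v v = 0" by simp
  then have "Q *v v = v" using v1 by simp
  then have "v \<bullet> v = (transpose Q *v v) \<bullet> v" by (metis inner_matrix_transpose transpose_transpose inner_commute)
  then show "v = 0" using Qtv by simp
qed

text \<open>For an idempotent Q, the orthogonal projection onto the range of Q.\<close>

definition range_proj :: "real^'m::finite^'m \<Rightarrow> real^'m^'m" where
  "range_proj Q = Q ** matrix_inv (Q + transpose Q - mat 1)"

lemma range_proj_props: fixes Q :: "real^'m::finite^'m" assumes Q: "Q ** Q = Q"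
  shows "transpose (range_proj Q) = range_proj Q" "range_proj Q ** range_proj Q = range_proj Q"
    "range_proj Q ** Q = Q" "Q ** range_proj Q = range_proj Q"
proof -
  define M where "M = Q + transpose Q - mat 1"
  define N where "N = matrix_inv M"
  have iM: "invertible M" using invertible_idempotent_sym_sum[OF Q] M_def by simp
  have MN: "M ** N = mat 1" "N ** M = mat 1" using matrix_inv_left matrix_inv_right iM N_def by auto
  have Qt: "transpose Q ** transpose Q = transpose Q" by (simp only: matrix_transpose_mul[symmetric] Q)
  have tM: "transpose M = M" by (simp add: M_def matrix_ring_simps)
  have tN: "transpose N = N"
  proof -
    have "M ** transpose N = mat 1"
      using arg_cong[OF MN(2), of transpose] by (simp only: matrix_transpose_mul tM transpose_mat)
    then show ?thesis using matrix_inv_unique N_def by metis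
  qed
  have QM: "Q ** M = Q ** transpose Q" "M ** transpose Q = Q ** transpose Q"
    by (simp_all add: M_def matrix_ring_simps Q Qt)
  have "N ** transpose Q = N ** (transpose Q ** M) ** N"
    by (simp add: matrix_mul_assoc[symmetric] MN)
  also have "\<dots> = N ** (M ** Q) ** N" by (simp add: M_def matrix_ring_simps Q Qt)
  also have "\<dots> = Q ** N" by (simp add: matrix_mul_assoc[symmetric] matrix_mul_assoc_eq[OF MN(2)])
  finally have NQt: "N ** transpose Q = Q ** N" .
  have F: "range_proj Q = Q ** N" by (simp add: range_proj_def N_def M_def)
  show "transpose (range_proj Q) = range_proj Q" by (simp add: F matrix_transpose_mul tN NQt)
  show FQ: "range_proj Q ** Q = Q"
  proof -
    have "N ** Q = N ** (Q ** M) ** N" by (simp add: matrix_mul_assoc[symmetric] MN)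
    also have "\<dots> = N ** (M ** transpose Q) ** N" by (simp only: QM)
    also have "\<dots> = transpose Q ** N" by (simp add: matrix_mul_assoc[symmetric] matrix_mul_assoc_eq[OF MN(2)])
    finally have "range_proj Q ** Q = Q ** (transpose Q ** N)" by (simp add: F matrix_mul_assoc[symmetric])
    also have "\<dots> = (Q ** M) ** N" by (simp add: QM(1) matrix_mul_assoc)
    also have "\<dots> = Q" by (simp add: matrix_mul_assoc[symmetric] MN)
    finally show ?thesis .
  qed
  show "range_proj Q ** range_proj Q = range_proj Q"
    by (metis F FQ matrix_mul_assoc)
  show "Q ** range_proj Q = range_proj Q" by (simp add: F matrix_mul_assoc Q)
qed

lemma range_range_proj: fixes Q :: "real^'m::finite^'m" assumes Q: "Q ** Q = Q"
  shows "range ((*v) (range_proj Q)) = range ((*v) Q)"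
proof
  show "range ((*v) (range_proj Q)) \<subseteq> range ((*v) Q)"
    by (clarify, metis matrix_vector_mul_assoc range_proj_props(4)[OF Q] rangeI)
  show "range ((*v) Q) \<subseteq> range ((*v) (range_proj Q))"
    by (clarify, metis matrix_vector_mul_assoc range_proj_props(3)[OF Q] rangeI)
qed

lemma range_proj_unique: fixes Q P :: "real^'m::finite^'m" assumes Q: "Q ** Q = Q"
  and P: "transpose P = P" "P ** Q = Q" "Q ** P = P"
  shows "range_proj Q = P"
proof -
  note fp = range_proj_props[OF Q]
  have 1: "range_proj Q ** P = P"
    by (metis P(3) fp(3) matrix_mul_assoc)
  have 2: "P ** range_proj Q = range_proj Q"
    by (metis P(2) fp(4) matrix_mul_assoc)
  have "range_proj Q = transpose (P ** range_proj Q)" by (simp add: 2 fp)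
  also have "\<dots> = range_proj Q ** P" by (simp add: matrix_transpose_mul fp P)
  finally show ?thesis using 1 by simp
qed

section \<open>The Lagrangian Grassmannian as a set of projections\<close>

text \<open>The last condition says that J maps the range of P onto its orthogonal complement.\<close>

definition lag_projection :: "'n::finite mat2n \<Rightarrow> bool" where
  "lag_projection P \<longleftrightarrow> transpose P = P \<and> P ** P = P \<and> omega_mat ** P + P ** omega_mat = omega_mat"

lemma lag_projection_mult_omega: "lag_projection P \<Longrightarrow> P ** omega_mat = omega_mat - omega_mat ** P"
  unfolding lag_projection_def by (auto simp: algebra_simps)

lemma lag_projection_sandwich_omega: "lag_projection P \<Longrightarrow> P ** omega_mat ** P = 0"
  by (simp add: lag_projection_mult_omega matrix_ring_simps lag_projection_def)

lemma lag_projection_facts: fixes P :: "'n::finite mat2n" assumes "lag_projection P"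
  shows "transpose P = P" "P ** P = P" "\<And>Z::'n mat2n. P ** (P ** Z) = P ** Z"
    "P ** (omega_mat ** P) = 0" "\<And>Z::'n mat2n. P ** (omega_mat ** (P ** Z)) = 0"
proof -
  show PP: "transpose P = P" "P ** P = P" using assms lag_projection_def by auto
  show "P ** (P ** Z) = P ** Z" for Z :: "'n mat2n" by (rule matrix_mul_assoc_eq[OF PP(2)])
  have "(P ** omega_mat) ** P = 0" by (rule lag_projection_sandwich_omega[OF assms])
  then show "P ** (omega_mat ** P) = 0" "P ** (omega_mat ** (P ** Z)) = 0" for Z :: "'n mat2n"
    using matrix_mul_assoc_eq[of "P ** omega_mat" P 0 Z] by (simp_all add: matrix_mul_assoc)
qed

lemma lag_projection_if_lag_grassmannian: fixes P :: "'n::finite mat2n"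
  assumes "P \<in> lag_grassmannian" shows "lag_projection P"
proof -
  obtain L where L: "lagrangian L" "\<forall>x. P *v x \<in> L \<and> (\<forall>y\<in>L. (x - P *v x) \<bullet> y = 0)"
    using assms unfolding lag_grassmannian_def by blast
  have sL: "subspace L" using L(1) lagrangian_def by blast
  note pp = orthogonal_projection_props[OF sL L(2)]
  have JL: "(*v) omega_mat ` L = orth_compl L" by (rule omega_mat_image_lagrangian[OF L(1)])
  have "(omega_mat ** P + P ** omega_mat) *v x = omega_mat *v x" for x
  proof -
    define z where "z = x - P *v x"
    have "z \<in> orth_compl L" using L(2) unfolding z_def orth_compl_def orthogonal_def by (auto simp: inner_commute)
    then obtain l where l: "l \<in> L" "z = omega_mat *v l" using JL by auto
    have "omega_mat *v (P *v x) \<in> orth_compl L" using JL L(2) by auto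
    then have "P *v (omega_mat *v (P *v x)) = 0" using pp(4) by blast
    moreover have "P *v (omega_mat *v z) = - l" using l pp(1) by (simp add: omega_mat_omega_mat_vector vec.neg)
    moreover have Jx: "omega_mat *v x = omega_mat *v (P *v x) + omega_mat *v z"
      by (simp add: z_def flip: vec.add)
    ultimately have "P *v (omega_mat *v x) = - l" by (simp add: vec.add)
    moreover have "omega_mat *v z = - l" using l by (simp add: omega_mat_omega_mat_vector)
    ultimately show ?thesis using Jx by (simp add: matrix_vector_simps)
  qed
  then have "omega_mat ** P + P ** omega_mat = omega_mat" by (simp add: matrix_eq)
  then show ?thesis unfolding lag_projection_def using pp by blast
qed

lemma lagrangian_range_lag_projection: fixes P :: "'n::finite mat2n"
  assumes "lag_projection P" shows "lagrangian (range ((*v) P))"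
proof -
  have h: "transpose P = P" "P ** P = P" "omega_mat ** P + P ** omega_mat = omega_mat"
    using assms lag_projection_def by auto
  define L where "L = range ((*v) P)"
  have sL: "subspace L" unfolding L_def by (rule subspace_range_matrix)
  have isoL: "isotropic L"
    unfolding L_def by (rule isotropic_range) (simp add: h(1) lag_projection_sandwich_omega[OF assms])
  have "orth_compl L \<subseteq> (*v) omega_mat ` L"
  proof
    fix w assume w: "w \<in> orth_compl L"
    have "(P *v w) \<bullet> (P *v w) = w \<bullet> (P *v (P *v w))" by (simp add: inner_matrix_transpose h(1))
    also have "\<dots> = w \<bullet> (P *v w)" by (simp add: matrix_vector_mul_assoc h(2))
    also have "\<dots> = 0" using w unfolding orth_compl_def orthogonal_def L_def by (auto simp: inner_commute)
    finally have Pw: "P *v w = 0" by simp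
    have "P *v (omega_mat *v w) = omega_mat *v w"
      using arg_cong[OF h(3), of "\<lambda>A. A *v w"] by (simp add: matrix_vector_simps Pw flip: matrix_vector_mul_assoc)
    then have "- (omega_mat *v w) \<in> L" unfolding L_def by (metis rangeI vec.neg)
    moreover have "w = omega_mat *v (- (omega_mat *v w))" by (simp add: vec.neg omega_mat_omega_mat_vector)
    ultimately show "w \<in> (*v) omega_mat ` L" by blast
  qed
  then have "dim (orth_compl L) \<le> dim L" using dim_subset dim_omega_mat_image by metis
  then have "dim L = CARD('n)" using dim_orth_compl[OF sL] isotropic_dim_le[OF sL isoL] by simp
  then show ?thesis using lagrangian_iff_isotropic sL isoL L_def by blast
qed

lemma lag_grassmannianI: fixes P :: "'n::finite mat2n"
  assumes "transpose P = P" "P ** P = P" "lagrangian (range ((*v) P))"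
  shows "P \<in> lag_grassmannian"
  unfolding lag_grassmannian_def using assms orthogonal_projection_onto_range by blast

lemma lag_grassmannian_iff: "P \<in> lag_grassmannian \<longleftrightarrow> lag_projection P"
  using lag_projection_if_lag_grassmannian lag_grassmannianI lagrangian_range_lag_projection
  unfolding lag_projection_def by blast

section \<open>The tangent bundle of the Lagrangian Grassmannian\<close>

definition lag_tangent :: "'n::finite mat2n \<Rightarrow> 'n mat2n set" where
  "lag_tangent P = {X. transpose X = X \<and> X = P ** X + X ** P \<and> omega_mat ** X + X ** omega_mat = 0}"

lemma has_derivative_eq_on_interval:
  fixes f g :: "real \<Rightarrow> 'b::real_normed_vector"
  assumes "(f has_derivative F) (at 0)" "(g has_derivative G) (at 0)" "e > 0"
    "\<And>t. t \<in> {-e<..<e} \<Longrightarrow> f t = g t"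
  shows "F = G"
proof -
  have "(g has_derivative F) (at 0)"
    by (rule has_derivative_transform_within_open[where s="{-e<..<e}", OF assms(1) _ _ assms(4)])
      (use assms(3) in auto)
  then show ?thesis using assms(2) has_derivative_unique by blast
qed

lemma tangent_space_subset_lag_tangent: fixes P :: "'n::finite mat2n"
  assumes "X \<in> tangent_space lag_grassmannian P"
  shows "X \<in> lag_tangent P"
proof -
  obtain \<gamma> e where \<gamma>: "e > 0" "\<gamma> ` {-e<..<e} \<subseteq> lag_grassmannian"
    "\<gamma> 0 = P" "(\<gamma> has_vector_derivative X) (at 0)"
    using assms unfolding tangent_space_def by blast
  have d: "(\<gamma> has_derivative (\<lambda>t. t *\<^sub>R X)) (at 0)" using \<gamma>(4) has_vector_derivative_def by blast
  have lg: "lag_projection (\<gamma> t)" if "t \<in> {-e<..<e}" for t using \<gamma>(2) that lag_grassmannian_iff by blast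
  have "(\<lambda>t. transpose (t *\<^sub>R X)) = (\<lambda>t. t *\<^sub>R X)"
  proof (rule has_derivative_eq_on_interval[OF _ d \<gamma>(1)])
    show "((\<lambda>t. transpose (\<gamma> t)) has_derivative (\<lambda>t. transpose (t *\<^sub>R X))) (at 0)"
      by (rule bounded_linear.has_derivative[OF bounded_linear_transpose d])
    show "transpose (\<gamma> t) = \<gamma> t" if "t \<in> {-e<..<e}" for t using lg[OF that] lag_projection_def by blast
  qed
  from fun_cong[OF this, of 1] have "transpose X = X" by simp
  moreover have "(\<lambda>t. \<gamma> 0 ** (t *\<^sub>R X) + (t *\<^sub>R X) ** \<gamma> 0) = (\<lambda>t. t *\<^sub>R X)"
  proof (rule has_derivative_eq_on_interval[OF _ d \<gamma>(1)])
    show "((\<lambda>t. \<gamma> t ** \<gamma> t) has_derivative (\<lambda>t. \<gamma> 0 ** (t *\<^sub>R X) + (t *\<^sub>R X) ** \<gamma> 0)) (at 0)"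
      by (rule bounded_bilinear.FDERIV[OF bounded_bilinear_matrix_mul d d])
    show "\<gamma> t ** \<gamma> t = \<gamma> t" if "t \<in> {-e<..<e}" for t using lg[OF that] lag_projection_def by blast
  qed
  from fun_cong[OF this, of 1] have "P ** X + X ** P = X" using \<gamma>(3) by simp
  moreover have "(\<lambda>t. omega_mat ** (t *\<^sub>R X) + (t *\<^sub>R X) ** omega_mat) = (\<lambda>t. 0)"
  proof (rule has_derivative_eq_on_interval[OF _ has_derivative_const \<gamma>(1)])
    show "((\<lambda>t. omega_mat ** \<gamma> t + \<gamma> t ** omega_mat) has_derivative
        (\<lambda>t. omega_mat ** (t *\<^sub>R X) + (t *\<^sub>R X) ** omega_mat)) (at 0)"
      by (intro has_derivative_add bounded_linear.has_derivative[OF bounded_linear_matrix_mul_right d]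
          bounded_linear.has_derivative[OF bounded_linear_matrix_mul_left d])
    show "omega_mat ** \<gamma> t + \<gamma> t ** omega_mat = omega_mat" if "t \<in> {-e<..<e}" for t
      using lg[OF that] lag_projection_def by blast
  qed
  from fun_cong[OF this, of 1] have "omega_mat ** X + X ** omega_mat = 0" by simp
  ultimately show ?thesis unfolding lag_tangent_def by simp
qed

lemma lag_tangent_facts: fixes P :: "'n::finite mat2n" assumes "lag_projection P" "X \<in> lag_tangent P"
  shows "transpose X = X" "omega_mat ** X = - (X ** omega_mat)"
    "\<And>Z::'n mat2n. omega_mat ** (X ** Z) = - (X ** (omega_mat ** Z))"
    "P ** (X ** P) = 0" "\<And>Z::'n mat2n. P ** (X ** (P ** Z)) = 0"
    "P ** (X ** (omega_mat ** P)) = X ** (omega_mat ** P)" "P ** (X ** (X ** (omega_mat ** P))) = 0"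
    "X = P ** X + X ** P"
proof -
  note lp = lag_projection_facts[OF assms(1)]
  show XX: "transpose X = X" "X = P ** X + X ** P" using assms(2) lag_tangent_def by auto
  have "omega_mat ** X + X ** omega_mat = 0" using assms(2) lag_tangent_def by blast
  then show JX: "omega_mat ** X = - (X ** omega_mat)" by (simp add: eq_neg_iff_add_eq_0)
  show "omega_mat ** (X ** Z) = - (X ** (omega_mat ** Z))" for Z :: "'n mat2n"
    using matrix_mul_assoc_eq[OF JX, of Z] by (simp add: matrix_ring_simps)
  have "P ** X ** P = P ** (P ** X + X ** P) ** P" using XX(2) by simp
  also have "\<dots> = P ** X ** P + P ** X ** P" by (simp add: matrix_ring_simps lp)
  finally have PXP: "(P ** X) ** P = 0" by simp
  then show "P ** (X ** P) = 0" "P ** (X ** (P ** Z)) = 0" for Z :: "'n mat2n"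
    using matrix_mul_assoc_eq[of "P ** X" P 0 Z] by (simp_all add: matrix_mul_assoc)
  have "X ** (omega_mat ** P) = (P ** X + X ** P) ** (omega_mat ** P)" using XX(2) by simp
  also have "\<dots> = P ** (X ** (omega_mat ** P))" by (simp add: matrix_ring_simps lp)
  finally have XJP: "X ** (omega_mat ** P) = P ** (X ** (omega_mat ** P))" .
  then show "P ** (X ** (omega_mat ** P)) = X ** (omega_mat ** P)" by simp
  have "P ** (X ** (X ** (omega_mat ** P))) = P ** (X ** (P ** (X ** (omega_mat ** P))))" using XJP by simp
  also have "\<dots> = 0" using matrix_mul_assoc_eq[OF PXP, of "X ** (omega_mat ** P)"] by (simp add: matrix_mul_assoc)
  finally show "P ** (X ** (X ** (omega_mat ** P))) = 0" .
qed

text \<open>The range of this idempotent is the graph of t (1 - P) X over the range of P, so the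
  orthogonal projections onto it form a curve through P in the Grassmannian with velocity X.\<close>

definition tangent_idem :: "'n::finite mat2n \<Rightarrow> 'n mat2n \<Rightarrow> real \<Rightarrow> 'n mat2n" where
  "tangent_idem P X t = P + t *\<^sub>R ((mat 1 - P) ** X ** P)"

lemma tangent_idem_facts: fixes P :: "'n::finite mat2n" assumes "lag_projection P" "X \<in> lag_tangent P"
  shows "tangent_idem P X t ** tangent_idem P X t = tangent_idem P X t"
    "tangent_idem P X t ** P = tangent_idem P X t" "P ** tangent_idem P X t = P"
    "transpose (tangent_idem P X t) ** omega_mat ** tangent_idem P X t = 0"
proof -
  note lp = lag_projection_facts[OF assms(1)] and tp = lag_tangent_facts(1-7)[OF assms]
  show "tangent_idem P X t ** tangent_idem P X t = tangent_idem P X t"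
    by (simp add: tangent_idem_def matrix_ring_simps lp algebra_simps)
  show "tangent_idem P X t ** P = tangent_idem P X t"
    by (simp add: tangent_idem_def matrix_ring_simps lp algebra_simps)
  show "P ** tangent_idem P X t = P"
    by (simp add: tangent_idem_def matrix_ring_simps lp algebra_simps)
  show "transpose (tangent_idem P X t) ** omega_mat ** tangent_idem P X t = 0"
    by (simp add: tangent_idem_def matrix_ring_simps lp tp algebra_simps)
qed

lemma dim_range_eq_if_mult_eq: fixes K P :: "real^'m::finite^'m"
  assumes "K ** P = K" "P ** K = P"
  shows "dim (range ((*v) K)) = dim (range ((*v) P))"
proof -
  have range_eq: "range ((*v) A) = (*v) A ` range ((*v) B)" if "A ** B = A" for A B :: "real^'m^'m"
    using that by (auto simp: matrix_vector_mul_assoc image_iff)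
  show ?thesis
    using dim_image_le[OF matrix_vector_mul_linear] range_eq[OF assms(1)] range_eq[OF assms(2)]
    by (metis order_antisym)
qed

lemma lagrangian_range_tangent_idem: fixes P :: "'n::finite mat2n"
  assumes "lag_projection P" "X \<in> lag_tangent P"
  shows "lagrangian (range ((*v) (tangent_idem P X t)))"
proof -
  note kf = tangent_idem_facts[OF assms, of t]
  have "dim (range ((*v) (tangent_idem P X t))) = CARD('n)"
    using dim_range_eq_if_mult_eq[OF kf(2,3)] lagrangian_range_lag_projection[OF assms(1)]
    by (simp add: lagrangian_def)
  then show ?thesis
    using lagrangian_iff_isotropic subspace_range_matrix isotropic_range[OF kf(4)] by blast
qed

lemma range_proj_tangent_idem_in_lag_grassmannian: fixes P :: "'n::finite mat2n"
  assumes "lag_projection P" "X \<in> lag_tangent P"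
  shows "range_proj (tangent_idem P X t) \<in> lag_grassmannian"
proof -
  note kf = tangent_idem_facts[OF assms, of t]
  show ?thesis
    by (rule lag_grassmannianI)
      (simp_all add: range_proj_props[OF kf(1)] range_range_proj[OF kf(1)]
        lagrangian_range_tangent_idem[OF assms])
qed

definition range_proj_mexpr :: "('a, 'm::finite) mexpr \<Rightarrow> ('a, 'm) mexpr" where
  "range_proj_mexpr e = MMul e (MInv (MAdd (MAdd e (MMap transpose e)) (MConst (- mat 1))))"

lemma meval_range_proj_mexpr: "meval (range_proj_mexpr e) x = range_proj (meval e x)"
  by (simp add: range_proj_mexpr_def range_proj_def)

lemma mexpr_wf_range_proj_mexpr: "mexpr_wf e \<Longrightarrow> mexpr_wf (range_proj_mexpr e)"
  by (simp add: range_proj_mexpr_def bounded_linear_transpose)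

lemma mexpr_defined_range_proj_mexpr:
  "mexpr_defined (range_proj_mexpr e) x \<longleftrightarrow>
     mexpr_defined e x \<and> invertible (meval e x + transpose (meval e x) - mat 1)"
  by (simp add: range_proj_mexpr_def)

definition tangent_curve_mexpr :: "'n::finite mat2n \<Rightarrow> 'n mat2n \<Rightarrow> (real, 'n + 'n) mexpr" where
  "tangent_curve_mexpr P X =
     range_proj_mexpr (MAdd (MConst P) (MLin (\<lambda>t. t *\<^sub>R ((mat 1 - P) ** X ** P))))"

lemma meval_tangent_curve_mexpr: "meval (tangent_curve_mexpr P X) t = range_proj (tangent_idem P X t)"
  by (simp add: tangent_curve_mexpr_def meval_range_proj_mexpr tangent_idem_def)

text \<open>At t = 0 the inverse in the range projection is that of the reflection 2 P - 1, which is
  its own inverse.\<close>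

lemma mexpr_deriv_tangent_curve_mexpr: fixes P :: "'n::finite mat2n"
  assumes "lag_projection P" "X \<in> lag_tangent P"
  shows "meval (mexpr_deriv h (tangent_curve_mexpr P X)) 0 = h *\<^sub>R X"
proof -
  note lp = lag_projection_facts[OF assms(1)] and tp = lag_tangent_facts(1-7)[OF assms]
  have inv0: "matrix_inv (2 * P - mat 1) = 2 * P - mat 1"
    by (rule matrix_inv_unique)
      (simp add: matrix_ring_simps lp algebra_simps matrix_times_numeral numeral_times_matrix)
  have "meval (mexpr_deriv h (tangent_curve_mexpr P X)) 0 = h *\<^sub>R (P ** X + X ** P)"
    by (simp add: tangent_curve_mexpr_def range_proj_mexpr_def lp inv0)
      (simp add: matrix_ring_simps lp tp numeral_times_matrix matrix_times_numeral algebra_simps)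
  then show ?thesis using lag_tangent_facts(8)[OF assms] by simp
qed

lemma lag_tangent_subset_tangent_space: fixes P :: "'n::finite mat2n"
  assumes "lag_projection P" "X \<in> lag_tangent P"
  shows "X \<in> tangent_space lag_grassmannian P"
  unfolding tangent_space_def
proof (intro CollectI exI conjI)
  have wf: "mexpr_wf (tangent_curve_mexpr P X)"
    by (simp add: tangent_curve_mexpr_def mexpr_wf_range_proj_mexpr bounded_linear_scaleR_left)
  have defined: "mexpr_defined (tangent_curve_mexpr P X) t" for t
    using invertible_idempotent_sym_sum[OF tangent_idem_facts(1)[OF assms, of t]]
    by (simp add: tangent_curve_mexpr_def mexpr_defined_range_proj_mexpr tangent_idem_def)
  show "(0::real) < 1" by simp
  show "smooth_on {-1<..<1} (meval (tangent_curve_mexpr P X))"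
    using smooth_on_meval[OF wf] defined by blast
  show "meval (tangent_curve_mexpr P X) ` {-1<..<1} \<subseteq> lag_grassmannian"
    using range_proj_tangent_idem_in_lag_grassmannian[OF assms] by (auto simp: meval_tangent_curve_mexpr)
  have "range_proj P = P"
    using lag_projection_facts[OF assms(1)] by (intro range_proj_unique) auto
  then show "meval (tangent_curve_mexpr P X) 0 = P" by (simp add: meval_tangent_curve_mexpr tangent_idem_def)
  show "(meval (tangent_curve_mexpr P X) has_vector_derivative X) (at 0)"
    using has_derivative_meval[OF wf defined, of 0]
    by (simp add: has_vector_derivative_def mexpr_deriv_tangent_curve_mexpr[OF assms])
qed

lemma tangent_bundle_lag_grassmannian:
  "tangent_bundle (lag_grassmannian :: 'n::finite mat2n set) = {(P, X). lag_projection P \<and> X \<in> lag_tangent P}"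
  unfolding tangent_bundle_def
  using lag_grassmannian_iff tangent_space_subset_lag_tangent lag_tangent_subset_tangent_space by blast

lemma lagrangian_range_if_complementary_isotropic: fixes Q :: "'n::finite mat2n"
  assumes "transpose Q ** omega_mat ** Q = 0" "transpose (mat 1 - Q) ** omega_mat ** (mat 1 - Q) = 0"
  shows "lagrangian (range ((*v) Q))"
proof -
  define Lplus where "Lplus = range ((*v) Q)"
  define Lminus where "Lminus = range ((*v) (mat 1 - Q))"
  have sub: "subspace Lplus" "subspace Lminus" unfolding Lplus_def Lminus_def by (rule subspace_range_matrix)+
  have iso: "isotropic Lplus" "isotropic Lminus" unfolding Lplus_def Lminus_def using isotropic_range assms by blast+
  have "{x + y |x y. x \<in> Lplus \<and> y \<in> Lminus} = UNIV"
  proof -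
    have "z = Q *v z + (mat 1 - Q) *v z" for z by (simp add: matrix_vector_simps)
    then show ?thesis unfolding Lplus_def Lminus_def by blast
  qed
  then have "2 * CARD('n) \<le> dim Lplus + dim Lminus"
    using dim_sums_Int[OF sub] by (simp add: card_UNIV_sum)
  moreover have "dim Lplus \<le> CARD('n)" "dim Lminus \<le> CARD('n)"
    using isotropic_dim_le sub iso by blast+
  ultimately have "dim Lplus = CARD('n)" by simp
  then show ?thesis using lagrangian_iff_isotropic sub iso Lplus_def by blast
qed

lemma antisymp_invol_iff: "S \<in> antisymp_invol \<longleftrightarrow>
   invertible S \<and> S ** S = mat 1 \<and> transpose S ** omega_mat ** S = - (omega_mat :: 'n::finite mat2n)"
proof -
  have pullback: "symp (S *v v) (S *v w) = v \<bullet> ((transpose S ** omega_mat ** S) *v w)" for v w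
    by (simp add: symp_eq_inner_omega_mat inner_matrix_transpose matrix_vector_mul_assoc matrix_mul_assoc)
  have neg: "- symp v w = v \<bullet> ((- omega_mat) *v w)" for v w :: "real^('n + 'n)"
    by (simp add: symp_eq_inner_omega_mat matrix_vector_mult_neg)
  have "(\<forall>v w. symp (S *v v) (S *v w) = - symp v w) \<longleftrightarrow> transpose S ** omega_mat ** S = - omega_mat"
  proof
    assume "\<forall>v w. symp (S *v v) (S *v w) = - symp v w"
    then show "transpose S ** omega_mat ** S = - omega_mat"
      by (intro matrix_eqI_inner) (simp only: pullback neg)
  qed (simp add: pullback neg)
  then show ?thesis unfolding antisymp_invol_def by blast
qed

lemma antisymp_invol_facts: fixes S :: "'n::finite mat2n" assumes "S \<in> antisymp_invol"
  shows "S ** S = mat 1" "\<And>Z::'n mat2n. S ** (S ** Z) = Z"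
    "transpose S ** (omega_mat ** S) = - omega_mat" "transpose S ** omega_mat = - (omega_mat ** S)"
    "S ** omega_mat = - (omega_mat ** transpose S)"
    "\<And>Z::'n mat2n. transpose S ** (omega_mat ** Z) = - (omega_mat ** (S ** Z))"
proof -
  have h: "S ** S = mat 1" "transpose S ** omega_mat ** S = - omega_mat"
    using assms antisymp_invol_iff by auto
  show SS: "S ** S = mat 1" by (rule h(1))
  show "S ** (S ** Z) = Z" for Z :: "'n mat2n" using matrix_mul_assoc_eq[OF SS, of Z] by simp
  show StJS: "transpose S ** (omega_mat ** S) = - omega_mat"
    using h(2) by (simp add: matrix_mul_assoc[symmetric])
  have "transpose S ** omega_mat = (transpose S ** (omega_mat ** S)) ** S"
    by (simp only: matrix_mul_assoc[symmetric] SS matrix_mul_rid)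
  also have "\<dots> = - (omega_mat ** S)" by (simp only: StJS matrix_neg_mul)
  finally show StJ: "transpose S ** omega_mat = - (omega_mat ** S)" .
  show "transpose S ** (omega_mat ** Z) = - (omega_mat ** (S ** Z))" for Z :: "'n mat2n"
    using matrix_mul_assoc_eq[OF StJ, of Z] by (simp add: matrix_ring_simps)
  have "S ** omega_mat = omega_mat ** (transpose S ** omega_mat) ** omega_mat"
    by (simp add: StJ matrix_ring_simps omega_mat_squared matrix_mul_assoc_eq[OF omega_mat_squared])
  also have "\<dots> = - (omega_mat ** transpose S)"
    by (simp add: matrix_mul_assoc[symmetric] omega_mat_squared matrix_mul_neg)
  finally show "S ** omega_mat = - (omega_mat ** transpose S)" .
qed

definition plus_proj :: "'n::finite mat2n \<Rightarrow> 'n mat2n" where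
  "plus_proj S = (1/2) *\<^sub>R (mat 1 + S)"

lemma plus_proj_idempotent: fixes S :: "'n::finite mat2n" assumes "S \<in> antisymp_invol"
  shows "plus_proj S ** plus_proj S = plus_proj S"
proof -
  have "(mat 1 + S) ** (mat 1 + S) = 2 *\<^sub>R (mat 1 + S)"
    by (simp add: matrix_ring_simps antisymp_invol_facts[OF assms] scaleR_2 algebra_simps)
  then show ?thesis by (simp add: plus_proj_def matrix_mul_scaleR matrix_scaleR_mul)
qed

lemma plus_proj_isotropic: fixes S :: "'n::finite mat2n" assumes "S \<in> antisymp_invol"
  shows "transpose (plus_proj S) ** omega_mat ** plus_proj S = 0"
    "transpose (mat 1 - plus_proj S) ** omega_mat ** (mat 1 - plus_proj S) = 0"
proof -
  note sf = antisymp_invol_facts[OF assms]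
  have "(mat 1 + transpose S) ** omega_mat ** (mat 1 + S) = 0" by (simp add: matrix_ring_simps sf)
  then show "transpose (plus_proj S) ** omega_mat ** plus_proj S = 0"
    by (simp add: plus_proj_def matrix_mul_scaleR matrix_scaleR_mul transpose_scalar transpose_add)
  have minus: "mat 1 - plus_proj S = (1/2) *\<^sub>R (mat 1 - S)"
    by (simp add: plus_proj_def vec_eq_iff mat_def field_simps)
  have "(mat 1 - transpose S) ** omega_mat ** (mat 1 - S) = 0" by (simp add: matrix_ring_simps sf)
  then show "transpose (mat 1 - plus_proj S) ** omega_mat ** (mat 1 - plus_proj S) = 0"
    unfolding minus by (simp add: matrix_mul_scaleR matrix_scaleR_mul transpose_scalar transpose_diff)
qed

lemma plus_proj_omega: fixes S :: "'n::finite mat2n" assumes "S \<in> antisymp_invol"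
  shows "omega_mat ** plus_proj S + transpose (plus_proj S) ** omega_mat = omega_mat"
    "plus_proj S ** omega_mat + omega_mat ** transpose (plus_proj S) = omega_mat"
proof -
  note sf = antisymp_invol_facts[OF assms]
  have "omega_mat ** (mat 1 + S) + (mat 1 + transpose S) ** omega_mat = 2 *\<^sub>R omega_mat"
    by (simp add: matrix_ring_simps sf scaleR_2 algebra_simps)
  moreover have "omega_mat ** plus_proj S + transpose (plus_proj S) ** omega_mat
      = (1/2) *\<^sub>R (omega_mat ** (mat 1 + S) + (mat 1 + transpose S) ** omega_mat)"
    by (simp add: plus_proj_def matrix_mul_scaleR matrix_scaleR_mul transpose_scalar transpose_add
        flip: scaleR_add_right)
  ultimately show "omega_mat ** plus_proj S + transpose (plus_proj S) ** omega_mat = omega_mat"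
    by simp
  have "(mat 1 + S) ** omega_mat + omega_mat ** (mat 1 + transpose S) = 2 *\<^sub>R omega_mat"
    by (simp add: matrix_ring_simps sf scaleR_2 algebra_simps)
  moreover have "plus_proj S ** omega_mat + omega_mat ** transpose (plus_proj S)
      = (1/2) *\<^sub>R ((mat 1 + S) ** omega_mat + omega_mat ** (mat 1 + transpose S))"
    by (simp add: plus_proj_def matrix_mul_scaleR matrix_scaleR_mul transpose_scalar transpose_add
        flip: scaleR_add_right)
  ultimately show "plus_proj S ** omega_mat + omega_mat ** transpose (plus_proj S) = omega_mat"
    by simp
qed

section \<open>The diffeomorphism\<close>

definition invol_to_tangent :: "'n::finite mat2n \<Rightarrow> 'n mat2n \<times> 'n mat2n" where
  "invol_to_tangent S = (range_proj (plus_proj S),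
     (range_proj (plus_proj S) - plus_proj S) + transpose (range_proj (plus_proj S) - plus_proj S))"

definition tangent_to_invol :: "'n::finite mat2n \<times> 'n mat2n \<Rightarrow> 'n mat2n" where
  "tangent_to_invol PX = 2 *\<^sub>R (fst PX - fst PX ** snd PX) - mat 1"

lemma lag_projection_range_proj_plus_proj: fixes S :: "'n::finite mat2n"
  assumes "S \<in> antisymp_invol"
  shows "lag_projection (range_proj (plus_proj S))"
proof -
  note idem = plus_proj_idempotent[OF assms]
  have "range_proj (plus_proj S) \<in> lag_grassmannian"
    using lag_grassmannianI range_proj_props[OF idem] range_range_proj[OF idem]
      lagrangian_range_if_complementary_isotropic[OF plus_proj_isotropic[OF assms]] by metis
  then show ?thesis using lag_grassmannian_iff by blast
qed

lemma lag_tangent_invol_to_tangent: fixes S :: "'n::finite mat2n" assumes "S \<in> antisymp_invol"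
  shows "snd (invol_to_tangent S) \<in> lag_tangent (fst (invol_to_tangent S))"
proof -
  define Q where "Q = plus_proj S"
  define P where "P = range_proj Q"
  have lP: "lag_projection P" using lag_projection_range_proj_plus_proj[OF assms] P_def Q_def by simp
  note fp = range_proj_props[OF plus_proj_idempotent[OF assms, folded Q_def], folded P_def]
  have h: "transpose P = P" "P ** P = P" "P ** Q = Q" "Q ** P = P"
    "P ** transpose Q = P" "transpose Q ** P = transpose Q"
    using fp by (simp_all, metis fp(1,4) matrix_transpose_mul, metis fp(1,3) matrix_transpose_mul)
  have hc: "P ** (P ** Z) = P ** Z" "P ** (Q ** Z) = Q ** Z" "Q ** (P ** Z) = P ** Z"
    "P ** (transpose Q ** Z) = P ** Z" "transpose Q ** (P ** Z) = transpose Q ** Z" for Z :: "'n mat2n"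
    using h by (simp_all add: matrix_mul_assoc)
  define X where "X = (P - Q) + transpose (P - Q)"
  have "transpose X = X" unfolding X_def by (simp only: transpose_add transpose_transpose add.commute)
  moreover have "X = P ** X + X ** P"
    by (simp add: X_def transpose_diff h hc matrix_ring_simps algebra_simps
        matrix_times_numeral numeral_times_matrix)
  moreover have "omega_mat ** X + X ** omega_mat
      = (omega_mat ** P + P ** omega_mat) + (omega_mat ** P + P ** omega_mat)
        - (omega_mat ** Q + transpose Q ** omega_mat) - (Q ** omega_mat + omega_mat ** transpose Q)"
    by (simp add: X_def transpose_diff h matrix_ring_simps algebra_simps
        matrix_times_numeral numeral_times_matrix)
  then have "omega_mat ** X + X ** omega_mat = 0"
    using lP plus_proj_omega[OF assms] unfolding lag_projection_def Q_def by simp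
  ultimately show ?thesis unfolding lag_tangent_def X_def P_def Q_def invol_to_tangent_def by simp
qed

lemma lag_tangent_omega_identity: fixes P :: "'n::finite mat2n"
  assumes "lag_projection P" "X \<in> lag_tangent P"
  shows "omega_mat ** (P ** X) + X ** (P ** omega_mat) = 0"
proof -
  have PJ: "P ** omega_mat = omega_mat - omega_mat ** P" by (rule lag_projection_mult_omega[OF assms(1)])
  have JP: "omega_mat ** P = omega_mat - P ** omega_mat" using PJ by (simp add: algebra_simps)
  have JX: "omega_mat ** X = - (X ** omega_mat)" by (rule lag_tangent_facts(2)[OF assms])
  have PX: "P ** X = X - X ** P" using lag_tangent_facts(8)[OF assms] by (simp add: algebra_simps)
  have JPX: "omega_mat ** (P ** X) = omega_mat ** X - P ** (omega_mat ** X)"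
    by (simp only: matrix_mul_assoc JP matrix_diff_rdistrib)
  have XPJ: "X ** (P ** omega_mat) = X ** omega_mat - X ** (omega_mat ** P)"
    by (simp only: PJ matrix_diff_ldistrib matrix_mul_assoc[symmetric])
  have "P ** (X ** omega_mat) = (P ** X) ** omega_mat" by (simp add: matrix_mul_assoc)
  also have "\<dots> = X ** omega_mat - X ** (P ** omega_mat)"
    by (simp only: PX matrix_diff_rdistrib matrix_mul_assoc[symmetric])
  also have "\<dots> = X ** (omega_mat ** P)" by (simp add: PJ matrix_diff_ldistrib)
  finally have "P ** (X ** omega_mat) = X ** (omega_mat ** P)" .
  then show ?thesis by (simp add: JPX XPJ JX matrix_mul_neg)
qed

lemma reflection_idempotent_involution: fixes Q :: "real^'m::finite^'m" assumes "Q ** Q = Q"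
  shows "(2 *\<^sub>R Q - mat 1) ** (2 *\<^sub>R Q - mat 1) = mat 1"
  by (simp add: matrix_ring_simps assms) (simp add: vec_eq_iff algebra_simps)

lemma reflection_idempotent_antisymp: fixes Q :: "'n::finite mat2n"
  assumes "transpose Q ** omega_mat ** Q = 0" "omega_mat ** Q + transpose Q ** omega_mat = omega_mat"
  shows "transpose (2 *\<^sub>R Q - mat 1) ** omega_mat ** (2 *\<^sub>R Q - mat 1) = - omega_mat"
proof -
  have "transpose (2 *\<^sub>R Q - mat 1) ** omega_mat ** (2 *\<^sub>R Q - mat 1)
     = 4 *\<^sub>R (transpose Q ** omega_mat ** Q)
       - 2 *\<^sub>R (omega_mat ** Q + transpose Q ** omega_mat) + omega_mat"
    by (simp add: matrix_ring_simps transpose_scalar transpose_diff) (simp add: vec_eq_iff algebra_simps)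
  also have "\<dots> = - omega_mat" by (simp add: assms) (simp add: vec_eq_iff algebra_simps)
  finally show ?thesis .
qed

text \<open>On the tangent bundle, tangent_to_invol is the reflection 2 Q - 1 in the idempotent
  Q = P - P X, whose range is that of P.\<close>

lemma tangent_to_invol_antisymp_invol: fixes P :: "'n::finite mat2n"
  assumes "lag_projection P" "X \<in> lag_tangent P"
  shows "tangent_to_invol (P, X) \<in> antisymp_invol"
proof -
  note lp = lag_projection_facts[OF assms(1)] and tp = lag_tangent_facts(1-7)[OF assms]
  define Q where "Q = P - P ** X"
  have QQ: "Q ** Q = Q" by (simp add: Q_def matrix_ring_simps lp tp)
  have S: "tangent_to_invol (P, X) = 2 *\<^sub>R Q - mat 1" by (simp add: tangent_to_invol_def Q_def)
  have tQ: "transpose Q = P - X ** P" by (simp add: Q_def transpose_diff matrix_transpose_mul lp tp)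
  have iso: "transpose Q ** omega_mat ** Q = 0" by (simp add: tQ Q_def matrix_ring_simps lp tp)
  have "omega_mat ** Q + transpose Q ** omega_mat
      = (omega_mat ** P + P ** omega_mat) - (omega_mat ** (P ** X) + X ** (P ** omega_mat))"
    by (simp add: tQ Q_def matrix_ring_simps lp tp algebra_simps)
  also have "\<dots> = omega_mat"
    using lag_tangent_omega_identity[OF assms] assms(1) unfolding lag_projection_def by simp
  finally have "omega_mat ** Q + transpose Q ** omega_mat = omega_mat" .
  moreover have SS: "tangent_to_invol (P, X) ** tangent_to_invol (P, X) = mat 1"
    unfolding S by (rule reflection_idempotent_involution[OF QQ])
  moreover have "invertible (tangent_to_invol (P, X))" using SS unfolding invertible_def by blast
  ultimately show ?thesis unfolding antisymp_invol_iff using reflection_idempotent_antisymp[OF iso] S by simp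
qed

lemma invol_to_tangent_tangent_to_invol: fixes P :: "'n::finite mat2n"
  assumes "lag_projection P" "X \<in> lag_tangent P"
  shows "invol_to_tangent (tangent_to_invol (P, X)) = (P, X)"
proof -
  note lp = lag_projection_facts[OF assms(1)] and tp = lag_tangent_facts(1-7)[OF assms]
  define Q where "Q = P - P ** X"
  have QQ: "Q ** Q = Q" by (simp add: Q_def matrix_ring_simps lp tp)
  have plus: "plus_proj (tangent_to_invol (P, X)) = Q"
    by (simp add: plus_proj_def tangent_to_invol_def Q_def algebra_simps
        matrix_times_numeral numeral_times_matrix)
  have proj: "range_proj Q = P"
    by (rule range_proj_unique[OF QQ]) (simp_all add: Q_def matrix_ring_simps lp tp)
  have "(P - Q) + transpose (P - Q) = P ** X + X ** P"
    by (simp add: Q_def transpose_diff matrix_transpose_mul lp tp)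
  also have "\<dots> = X" using lag_tangent_facts(8)[OF assms] by simp
  finally show ?thesis unfolding invol_to_tangent_def plus proj by simp
qed

lemma tangent_to_invol_invol_to_tangent: fixes S :: "'n::finite mat2n" assumes "S \<in> antisymp_invol"
  shows "tangent_to_invol (invol_to_tangent S) = S"
proof -
  define Q where "Q = plus_proj S"
  define P where "P = range_proj Q"
  note fp = range_proj_props[OF plus_proj_idempotent[OF assms, folded Q_def], folded P_def]
  have h: "transpose P = P" "P ** P = P" "P ** Q = Q" "P ** transpose Q = P"
    using fp by (simp_all, metis fp(1,4) matrix_transpose_mul)
  have "tangent_to_invol (invol_to_tangent S) = 2 *\<^sub>R (P - P ** ((P - Q) + transpose (P - Q))) - mat 1"
    by (simp add: tangent_to_invol_def invol_to_tangent_def P_def Q_def)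
  also have "\<dots> = 2 *\<^sub>R Q - mat 1"
    by (simp add: matrix_ring_simps transpose_diff h matrix_times_numeral numeral_times_matrix)
  also have "\<dots> = S" by (simp add: Q_def plus_proj_def)
  finally show ?thesis .
qed

lemma smooth_map_on_invol_to_tangent:
  "smooth_map_on (antisymp_invol :: 'n::finite mat2n set) invol_to_tangent"
proof -
  define Q :: "('n mat2n, 'n + 'n) mexpr" where
    "Q = MAdd (MConst ((1/2) *\<^sub>R mat 1)) (MLin (\<lambda>S. (1/2) *\<^sub>R S))"
  define P where "P = range_proj_mexpr Q"
  define D where "D = MAdd P (MMap uminus Q)"
  define X where "X = MAdd D (MMap transpose D)"
  have wf: "mexpr_wf P" "mexpr_wf X"
    by (simp_all add: X_def D_def P_def Q_def mexpr_wf_range_proj_mexpr bounded_linear_scaleR_right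
        bounded_linear_uminus bounded_linear_transpose)
  have meval_Q: "meval Q S = plus_proj S" for S
    by (simp add: Q_def plus_proj_def scaleR_add_right)
  show ?thesis
  proof (rule smooth_map_onI[OF open_mexpr_defined[OF wf(1)]])
    show "antisymp_invol \<subseteq> {S. mexpr_defined P S}"
      using plus_proj_idempotent invertible_idempotent_sym_sum
      by (auto simp: P_def mexpr_defined_range_proj_mexpr meval_Q) (simp add: Q_def)
    show "smooth_on {S. mexpr_defined P S} (\<lambda>S. (meval P S, meval X S))"
      by (intro smooth_on_Pair smooth_on_meval wf) (simp_all add: X_def D_def Q_def)
    show "\<forall>S\<in>antisymp_invol. (meval P S, meval X S) = invol_to_tangent S"
      by (simp add: invol_to_tangent_def X_def D_def P_def meval_range_proj_mexpr meval_Q)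
  qed
qed

lemma smooth_map_on_tangent_to_invol:
  "smooth_map_on (S :: ('n::finite mat2n \<times> 'n mat2n) set) tangent_to_invol"
proof (rule smooth_map_onI[OF open_UNIV subset_UNIV])
  let ?e = "MAdd (MMap (\<lambda>M. 2 *\<^sub>R M) (MAdd (MLin fst) (MMap uminus (MMul (MLin fst) (MLin snd)))))
              (MConst (- mat 1)) :: ('n mat2n \<times> 'n mat2n, 'n + 'n) mexpr"
  show "smooth_on UNIV (meval ?e)"
    by (rule smooth_on_meval) (simp_all add: bounded_linear_scaleR_right bounded_linear_fst
        bounded_linear_snd bounded_linear_uminus)
  show "\<forall>x\<in>S. meval ?e x = tangent_to_invol x"
    by (simp add: tangent_to_invol_def)
qed

theorem mainTheorem4:
  shows "diffeomorphic_sets (antisymp_invol :: (real^('n::finite + 'n)^('n + 'n)) set)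
           (tangent_bundle (lag_grassmannian :: (real^('n + 'n)^('n + 'n)) set))"
  unfolding diffeomorphic_sets_def tangent_bundle_lag_grassmannian
proof (intro exI conjI)
  show "invol_to_tangent ` antisymp_invol \<subseteq> {(P, X). lag_projection P \<and> X \<in> lag_tangent P}"
    using lag_tangent_invol_to_tangent lag_projection_range_proj_plus_proj
    by (auto simp: invol_to_tangent_def)
  show "tangent_to_invol ` {(P, X). lag_projection P \<and> X \<in> lag_tangent P} \<subseteq> antisymp_invol"
    using tangent_to_invol_antisymp_invol by auto
  show "\<forall>S\<in>antisymp_invol. tangent_to_invol (invol_to_tangent S) = S"
    using tangent_to_invol_invol_to_tangent by blast
  show "\<forall>PX\<in>{(P, X). lag_projection P \<and> X \<in> lag_tangent P}.
      invol_to_tangent (tangent_to_invol PX) = PX"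
    using invol_to_tangent_tangent_to_invol by auto
  show "smooth_map_on antisymp_invol invol_to_tangent" by (rule smooth_map_on_invol_to_tangent)
  show "smooth_map_on {(P, X). lag_projection P \<and> X \<in> lag_tangent P} tangent_to_invol"
    by (rule smooth_map_on_tangent_to_invol)
qed

end
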